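(* Let $F_c$ be a family and let $w$ be a weight function on $\bigcup F_c$ (i.e., $w(a) > 0$ for some $a \in \bigcup F_c$). If $\mathrm{fs}(F', w, \bigcup F_c) \ge 0$ for every $F' \in \mathrm{uce}(F_c)$, then $F_c$ is an FC-family.
   Context: All sets and families (sets of sets) are finite. A family $F$ is union closed if $A\cup B\in F$ for all $A,B\in F$; it is union closed for $F_c$ if it is union closed and $A \cup B \in F$ for all $A \in F$, $B \in F_c$. The union closed extensions of $F_c$ are $\mathrm{uce}(F_c) = \{F' : F' \subseteq \mathcal{P}(\bigcup F_c),\ F' \text{ union closed for } F_c\}$. A family $F$ is Frankl's if there is $a \in \bigcup F$ with $2\cdot|\{A\in F: a\in A\}| \ge |F|$; $F_c$ is an FC-family if every union-closed family $F\supseteq F_c$ is Frankl's. A weight function is a map $w$ from elements to $\mathbb{N}$; it is a weight function on $A$ if $w(a)>0$ for some $a\in A$. $\mathrm{sw}(w,A)=\sum_{a\in A} w(a)$. The share of a set $A$ w.r.t. $w$ and a set $X$ is the integer $\mathrm{ss}(A,w,X) = 2\,\mathrm{sw}(w,A) - \mathrm{sw}(w,X)$, and the share of a family is $\mathrm{fs}(F,w,X)=\sum_{A\in F}\mathrm{ss}(A,w,X)$. *)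

theory Defs
  imports Main
begin

definition finite_family :: "'a set set \<Rightarrow> bool" where
  "finite_family F \<longleftrightarrow> finite F \<and> (\<forall>A\<in>F. finite A)"

definition union_closed :: "'a set set \<Rightarrow> bool" where
  "union_closed F \<longleftrightarrow> (\<forall>A\<in>F. \<forall>B\<in>F. A \<union> B \<in> F)"

definition union_closed_for :: "'a set set \<Rightarrow> 'a set set \<Rightarrow> bool" where
  "union_closed_for F Fc \<longleftrightarrow> union_closed F \<and> (\<forall>A\<in>F. \<forall>B\<in>Fc. A \<union> B \<in> F)"

definition uce :: "'a set set \<Rightarrow> 'a set set set" where
  "uce Fc = {F'. F' \<subseteq> Pow (\<Union> Fc) \<and> union_closed_for F' Fc}"

definition frankls :: "'a set set \<Rightarrow> bool" where
  "frankls F \<longleftrightarrow> (\<exists>a\<in>\<Union> F. 2 * card {A\<in>F. a \<in> A} \<ge> card F)"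

definition FC_family :: "'a set set \<Rightarrow> bool" where
  "FC_family Fc \<longleftrightarrow>
     (\<forall>F. finite_family F \<longrightarrow> union_closed F \<longrightarrow> Fc \<subseteq> F \<longrightarrow> frankls F)"

definition weight_fun_on :: "('a \<Rightarrow> nat) \<Rightarrow> 'a set \<Rightarrow> bool" where
  "weight_fun_on w A \<longleftrightarrow> (\<exists>a\<in>A. w a > 0)"

definition sw :: "('a \<Rightarrow> nat) \<Rightarrow> 'a set \<Rightarrow> nat" where
  "sw w A = (\<Sum>a\<in>A. w a)"

definition ss :: "'a set \<Rightarrow> ('a \<Rightarrow> nat) \<Rightarrow> 'a set \<Rightarrow> int" where
  "ss A w X = 2 * int (sw w A) - int (sw w X)"

definition fs :: "'a set set \<Rightarrow> ('a \<Rightarrow> nat) \<Rightarrow> 'a set \<Rightarrow> int" where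
  "fs F w X = (\<Sum>A\<in>F. ss A w X)"

end

theory Submission
  imports Defs
begin

(* Let F be a union-closed family containing Fc, U = \<Union>Fc.
   (1) Weighted double counting: the total share of the traces A \<inter> U,
       A \<in> F, equals \<Sum>a\<in>U. w a * (2 |F_a| - |F|), where F_a = {A \<in> F. a \<in> A}.
   (2) Group the members of F by their part outside U.  Each group T gives
       the trace family {A \<inter> U | A \<in> F, A - U = T}, which is union closed
       for Fc and lies in Pow U, hence belongs to uce Fc; the trace map is
       injective on the group, so the group's total share is the family
       share of that trace family, which is \<ge> 0 by hypothesis.
   (3) Hence \<Sum>a\<in>U. w a * (2 |F_a| - |F|) \<ge> 0.  As some element of U has
       positive weight, some coefficient 2 |F_a| - |F| is nonnegative,
       i.e. F is Frankl's at an element a \<in> U \<subseteq> \<Union>F. *)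

lemma share_of_traces:
  fixes F :: "'a set set" and U :: "'a set" and w :: "'a \<Rightarrow> nat"
  assumes fF: "finite F" and fU: "finite U"
  shows "(\<Sum>A\<in>F. ss (A \<inter> U) w U)
       = (\<Sum>a\<in>U. int (w a) * (2 * int (card {A\<in>F. a \<in> A}) - int (card F)))"
proof -
  have trace_weight: "int (sw w (A \<inter> U)) = (\<Sum>a\<in>U. if a \<in> A then int (w a) else 0)" for A
  proof -
    have "int (sw w (A \<inter> U)) = (\<Sum>a\<in>U \<inter> A. int (w a))"
      unfolding sw_def by (simp add: of_nat_sum Int_commute)
    also have "\<dots> = (\<Sum>a\<in>U. if a \<in> A then int (w a) else 0)"
      by (rule sum.inter_restrict[OF fU])
    finally show ?thesis .
  qed
  have "(\<Sum>A\<in>F. ss (A \<inter> U) w U)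
      = 2 * (\<Sum>A\<in>F. \<Sum>a\<in>U. if a \<in> A then int (w a) else 0) - int (card F) * int (sw w U)"
    unfolding ss_def by (simp add: trace_weight sum_subtractf sum_distrib_left)
  also have "(\<Sum>A\<in>F. \<Sum>a\<in>U. if a \<in> A then int (w a) else 0)
           = (\<Sum>a\<in>U. \<Sum>A\<in>F. if a \<in> A then int (w a) else 0)"
    by (rule sum.swap)
  also have "\<dots> = (\<Sum>a\<in>U. int (w a) * int (card {A\<in>F. a \<in> A}))"
    using fF by (intro sum.cong refl) (simp add: sum.If_cases Int_def mult.commute)
  finally show ?thesis
    unfolding sw_def
    by (simp add: algebra_simps sum_subtractf sum_distrib_left sum_distrib_right of_nat_sum)
qed

definition trace_fibre :: "'a set set \<Rightarrow> 'a set \<Rightarrow> 'a set \<Rightarrow> 'a set set" where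
  "trace_fibre F U T = (\<lambda>A. A \<inter> U) ` {A\<in>F. A - U = T}"

lemma trace_fibre_in_uce:
  assumes uc: "union_closed F" and sub: "Fc \<subseteq> F"
  shows "trace_fibre F (\<Union>Fc) T \<in> uce Fc"
  unfolding uce_def union_closed_for_def union_closed_def
proof (intro CollectI conjI ballI)
  let ?U = "\<Union>Fc"
  show "trace_fibre F ?U T \<subseteq> Pow ?U" unfolding trace_fibre_def by auto
next
  fix X Y assume "X \<in> trace_fibre F (\<Union>Fc) T" "Y \<in> trace_fibre F (\<Union>Fc) T"
  then obtain A B where AB: "A \<in> F" "A - \<Union>Fc = T" "X = A \<inter> \<Union>Fc"
      "B \<in> F" "B - \<Union>Fc = T" "Y = B \<inter> \<Union>Fc"
    unfolding trace_fibre_def by auto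
  have "A \<union> B \<in> F" using uc AB unfolding union_closed_def by auto
  moreover have "(A \<union> B) - \<Union>Fc = T" "X \<union> Y = (A \<union> B) \<inter> \<Union>Fc" using AB by auto
  ultimately show "X \<union> Y \<in> trace_fibre F (\<Union>Fc) T" unfolding trace_fibre_def by auto
next
  fix X B assume X: "X \<in> trace_fibre F (\<Union>Fc) T" and B: "B \<in> Fc"
  then obtain A where A: "A \<in> F" "A - \<Union>Fc = T" "X = A \<inter> \<Union>Fc"
    unfolding trace_fibre_def by auto
  have "A \<union> B \<in> F" using uc A sub B unfolding union_closed_def by auto
  moreover have "(A \<union> B) - \<Union>Fc = T" "X \<union> B = (A \<union> B) \<inter> \<Union>Fc" using A B by auto
  ultimately show "X \<union> B \<in> trace_fibre F (\<Union>Fc) T" unfolding trace_fibre_def by auto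
qed

text \<open>Within one fibre a set is determined by its trace, so the family share
  of the fibre is the total share of the traces of its members.\<close>
lemma fs_trace_fibre:
  "fs (trace_fibre F U T) w U = (\<Sum>A\<in>{A\<in>F. A - U = T}. ss (A \<inter> U) w U)"
proof -
  have "inj_on (\<lambda>A. A \<inter> U) {A\<in>F. A - U = T}"
  proof (rule inj_onI)
    fix A B assume "A \<in> {A\<in>F. A - U = T}" "B \<in> {A\<in>F. A - U = T}" "A \<inter> U = B \<inter> U"
    then have "A = (A \<inter> U) \<union> T" "B = (B \<inter> U) \<union> T" "A \<inter> U = B \<inter> U" by auto
    then show "A = B" by simp
  qed
  then show ?thesis unfolding fs_def trace_fibre_def by (simp add: sum.reindex)
qed

lemma share_of_traces_by_fibres:
  assumes "finite F"
  shows "(\<Sum>A\<in>F. ss (A \<inter> U) w U) = (\<Sum>T\<in>(\<lambda>A. A - U) ` F. fs (trace_fibre F U T) w U)"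
  using sum.image_gen[OF assms, of "\<lambda>A. ss (A \<inter> U) w U" "\<lambda>A. A - U"]
  by (simp add: fs_trace_fibre)

lemma nonneg_coefficient_exists:
  fixes c :: "'a \<Rightarrow> int"
  assumes fU: "finite U" and a0: "a0 \<in> U" "w a0 > 0"
    and nn: "(\<Sum>a\<in>U. int (w a) * c a) \<ge> 0"
  shows "\<exists>a\<in>U. c a \<ge> 0"
proof (rule ccontr)
  assume "\<not> (\<exists>a\<in>U. c a \<ge> 0)"
  then have neg: "c a < 0" if "a \<in> U" for a using that by force
  have "(\<Sum>a\<in>U. int (w a) * c a) < (\<Sum>a\<in>U. 0)"
  proof (rule sum_strict_mono_ex1[OF fU])
    show "\<forall>a\<in>U. int (w a) * c a \<le> 0" using neg by (simp add: mult_nonneg_nonpos less_imp_le)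
    have "int (w a0) * c a0 < 0" using a0(2) neg[OF a0(1)] by (simp add: mult_pos_neg)
    then show "\<exists>a\<in>U. int (w a) * c a < 0" using a0(1) by blast
  qed
  with nn show False by simp
qed

theorem theorem1:
  fixes Fc :: "'a set set" and w :: "'a \<Rightarrow> nat"
  assumes "finite_family Fc"
    and "weight_fun_on w (\<Union> Fc)"
    and "\<forall>F'\<in>uce Fc. fs F' w (\<Union> Fc) \<ge> 0"
  shows "FC_family Fc"
  unfolding FC_family_def
proof (intro allI impI)
  fix F :: "'a set set"
  assume ff: "finite_family F" and uc: "union_closed F" and sub: "Fc \<subseteq> F"
  let ?U = "\<Union>Fc"
  have fU: "finite ?U" and fF: "finite F"
    using assms(1) ff unfolding finite_family_def by auto
  obtain a0 where a0: "a0 \<in> ?U" "w a0 > 0"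
    using assms(2) unfolding weight_fun_on_def by auto
  have "(\<Sum>T\<in>(\<lambda>A. A - ?U) ` F. fs (trace_fibre F ?U T) w ?U) \<ge> 0"
    using assms(3) trace_fibre_in_uce[OF uc sub] by (intro sum_nonneg) auto
  then have "(\<Sum>a\<in>?U. int (w a) * (2 * int (card {A\<in>F. a \<in> A}) - int (card F))) \<ge> 0"
    using share_of_traces[OF fF fU] share_of_traces_by_fibres[OF fF] by simp
  then obtain a where "a \<in> ?U" "2 * int (card {A\<in>F. a \<in> A}) - int (card F) \<ge> 0"
    using nonneg_coefficient_exists[where w = w and c = "\<lambda>a. 2 * int (card {A\<in>F. a \<in> A}) - int (card F)",
          OF fU a0]
    by blast
  moreover have "?U \<subseteq> \<Union>F" using sub by auto
  ultimately show "frankls F" unfolding frankls_def by force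
qed

end
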